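(* Suppose $\mathbf{a}=\{a_n\}_{n=1}^\infty$ and $\mathbf{b}=\{b_n\}_{n=1}^\infty$ are linearly recurrent sequences of complex numbers such that $|a_n-b_n|$ is bounded. Then the minimal polynomials of $\mathbf{a}$ and $\mathbf{b}$ have the same roots outside the unit circle, with the same multiplicities. In particular, $\max_k \mathrm{GR}^{(k)}(\mathbf{a})=\max_k\mathrm{GR}^{(k)}(\mathbf{b})$.
   Context: A linear recurrence is a relation $a_{n+d}+c_{d-1}a_{n+d-1}+\cdots+c_0a_n=0$ for all $n$ with constant complex coefficients; a sequence is linearly recurrent if it satisfies one, and its minimal polynomial is the unique monic characteristic polynomial $t^d+c_{d-1}t^{d-1}+\cdots+c_0$ of minimal degree of a linear recurrence it satisfies. For a complex sequence $\mathbf{a}$ and $k\ge1$, $\mathrm{GR}^{(k)}(\mathbf{a})=\limsup_{n\to\infty}|\det H_{n,k}|^{1/n}$, where $H_{n,k}$ is the $k\times k$ matrix with $(i,j)$ entry $a_{n+i+j}$ ($0\le i,j\le k-1$); $\mathrm{GR}^{(0)}(\mathbf{a})=1$. *)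

theory Defs
  imports Complex_Main "HOL-Computational_Algebra.Polynomial" "HOL-Library.Extended_Real"
    "Jordan_Normal_Form.Determinant"
begin

definition lin_rec_poly :: "(nat \<Rightarrow> complex) \<Rightarrow> complex poly \<Rightarrow> bool" where
  "lin_rec_poly a p \<longleftrightarrow> lead_coeff p = 1 \<and>
     (\<forall>n. (\<Sum>i\<le>degree p. coeff p i * a (n + i)) = 0)"

definition linearly_recurrent :: "(nat \<Rightarrow> complex) \<Rightarrow> bool" where
  "linearly_recurrent a \<longleftrightarrow> (\<exists>p. lin_rec_poly a p)"

definition min_poly :: "(nat \<Rightarrow> complex) \<Rightarrow> complex poly" where
  "min_poly a = (THE p. lin_rec_poly a p \<and> (\<forall>q. lin_rec_poly a q \<longrightarrow> degree p \<le> degree q))"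

definition hankel :: "(nat \<Rightarrow> complex) \<Rightarrow> nat \<Rightarrow> nat \<Rightarrow> complex mat" where
  "hankel a n k = mat k k (\<lambda>(i, j). a (n + i + j))"

definition GR :: "nat \<Rightarrow> (nat \<Rightarrow> complex) \<Rightarrow> ereal" where
  "GR k a = (if k = 0 then 1
     else limsup (\<lambda>n. ereal (root n (cmod (det (hankel a n k))))))"

end

(*
  If a - b is bounded, then c = a - b is a bounded linear recurrence, and its minimal polynomial
  has no root z with |z| > 1: a factor t - z would turn a bounded solution into a nonzero
  geometric sequence z^n e.  Since a = b + c, min_poly a divides min_poly b * min_poly c, so every
  root outside the unit circle has multiplicity in min_poly a at most that in min_poly b, and
  symmetrically.

  For the growth rates, split a = a1 + a2 along the factorisation of min_poly a into the roots
  mu_0, ..., mu_(K-1) of modulus > 1 (sorted by decreasing modulus) and the others.  Expanding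
  a1 and a2 in a Newton-type basis of solutions factors every Hankel matrix as X M_n Y with M_n
  block triangular, whose entries in row r are O(n^D rho_r^n), rho_r = |mu_r| for r < K and 1
  otherwise.  Expanding det (X M_n Y) over minors bounds det H_(n,k) by poly(n) (prod rho_r)^n for
  every k.  For k = K the term det X * prod mu_r^n * det Y dominates all other terms by a factor
  mu^n, mu = min |mu_r| > 1, and det Y is nonzero because no polynomial of degree < K annihilates
  a1.  Hence max_k GR^(k)(a) is the product of |z| over the roots of min_poly a outside the unit
  circle, which by the first part is the same for b.
*)
theory Submission
  imports Defs "HOL-Computational_Algebra.Fundamental_Theorem_Algebra" "HOL-Real_Asymp.Real_Asymp"
    "HOL-Computational_Algebra.Polynomial_Factorial" "HOL-Computational_Algebra.Field_as_Ring"
begin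

section \<open>Shift operators and minimal polynomials\<close>

text \<open>\<open>poly_shift q x\<close> is \<open>q(S) x\<close> for the shift operator \<open>(S x) n = x (n + 1)\<close>.\<close>
definition poly_shift :: "'a::comm_ring_1 poly \<Rightarrow> (nat \<Rightarrow> 'a) \<Rightarrow> nat \<Rightarrow> 'a" where
  "poly_shift q x n = (\<Sum>i\<le>degree q. coeff q i * x (n + i))"

lemma poly_shift_conv_sum:
  "degree q \<le> N \<Longrightarrow> poly_shift q x n = (\<Sum>i\<le>N. coeff q i * x (n + i))"
  unfolding poly_shift_def by (rule sum.mono_neutral_left) (auto simp: coeff_eq_0)

lemma poly_shift_0 [simp]: "poly_shift 0 x n = 0"
  by (simp add: poly_shift_def)

lemma poly_shift_1 [simp]: "poly_shift 1 x n = x n"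
  by (simp add: poly_shift_def)

lemma poly_shift_zero_seq [simp]: "poly_shift q (\<lambda>_. 0) = (\<lambda>_. 0)"
  by (simp add: poly_shift_def fun_eq_iff)

lemma poly_shift_linear: "poly_shift [:-z, 1:] x n = x (Suc n) - z * x n"
  by (simp add: poly_shift_def)

lemma poly_shift_pCons: "poly_shift (pCons c q) x n = c * x n + poly_shift q x (Suc n)"
proof -
  have "poly_shift (pCons c q) x n = (\<Sum>i\<le>Suc (degree q). coeff (pCons c q) i * x (n + i))"
    by (rule poly_shift_conv_sum) (simp add: degree_pCons_le)
  also have "\<dots> = c * x n + (\<Sum>i\<le>degree q. coeff q i * x (Suc n + i))"
    by (subst sum.atMost_Suc_shift) simp
  finally show ?thesis by (simp add: poly_shift_def)
qed

lemma poly_shift_add: "poly_shift (p + q) x n = poly_shift p x n + poly_shift q x n"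
proof -
  let ?N = "max (degree p) (degree q)"
  have "poly_shift (p + q) x n = (\<Sum>i\<le>?N. coeff (p + q) i * x (n + i))"
    by (rule poly_shift_conv_sum) (simp add: degree_add_le)
  also have "\<dots> = (\<Sum>i\<le>?N. coeff p i * x (n + i)) + (\<Sum>i\<le>?N. coeff q i * x (n + i))"
    by (simp add: algebra_simps sum.distrib)
  finally show ?thesis
    using poly_shift_conv_sum[of p ?N x n] poly_shift_conv_sum[of q ?N x n] by simp
qed

lemma poly_shift_smult: "poly_shift (smult c q) x n = c * poly_shift q x n"
  using poly_shift_conv_sum[of "smult c q" "degree q" x n]
  by (simp add: poly_shift_def sum_distrib_left mult.assoc degree_smult_le)

lemma poly_shift_mult: "poly_shift (p * q) x = poly_shift p (poly_shift q x)"
proof (induction p)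
  case (pCons c p)
  have "poly_shift (pCons c p * q) x n = poly_shift (pCons c p) (poly_shift q x) n" for n
    by (simp add: poly_shift_add poly_shift_smult poly_shift_pCons pCons.IH)
  then show ?case ..
qed (simp add: fun_eq_iff)

lemma poly_shift_commute: "poly_shift p (poly_shift q x) = poly_shift q (poly_shift p x)"
  by (metis poly_shift_mult mult.commute)

lemma poly_shift_seq_add: "poly_shift q (\<lambda>n. x n + y n) n = poly_shift q x n + poly_shift q y n"
  by (simp add: poly_shift_def algebra_simps sum.distrib)

lemma poly_shift_seq_diff: "poly_shift q (\<lambda>n. x n - y n) n = poly_shift q x n - poly_shift q y n"
  by (simp add: poly_shift_def algebra_simps sum_subtractf)

lemma poly_shift_seq_sum:
  "poly_shift q (\<lambda>n. \<Sum>s\<in>S. c s * f s n) n = (\<Sum>s\<in>S. c s * poly_shift q (f s) n)"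
  unfolding poly_shift_def by (simp add: sum_distrib_left sum.swap[of _ S] algebra_simps)

lemma poly_shift_sum_monom: "poly_shift (\<Sum>j<K. monom (v j) j) x n = (\<Sum>j<K. v j * x (n + j))"
proof (induction K)
  case (Suc K)
  have "(\<Sum>i\<le>K. coeff (monom (v K) K) i * x (n + i)) = (\<Sum>i\<le>K. if i = K then v K * x (n + i) else 0)"
    by (rule sum.cong) (auto simp: coeff_monom)
  then have "poly_shift (monom (v K) K) x n = v K * x (n + K)"
    by (simp add: poly_shift_conv_sum[of _ K] degree_monom_le)
  then show ?case by (simp add: poly_shift_add Suc.IH)
qed simp

lemma annihilated_seq_eq_0:
  assumes "lead_coeff q = 1" and "poly_shift q y = (\<lambda>_. 0)" and "\<And>m. m < degree q \<Longrightarrow> y m = 0"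
  shows "y m = 0"
proof (induction m rule: less_induct)
  case (less m)
  show ?case
  proof (cases "m < degree q")
    case False
    then obtain n where m: "m = n + degree q" by (metis add.commute le_Suc_ex not_less)
    have "0 = poly_shift q y n" using assms(2) by (simp add: fun_eq_iff)
    also have "\<dots> = (\<Sum>i<degree q. coeff q i * y (n + i)) + y m"
      using assms(1) m by (simp add: poly_shift_def lessThan_Suc_atMost[symmetric])
    also have "(\<Sum>i<degree q. coeff q i * y (n + i)) = 0"
      using less m by (intro sum.neutral) auto
    finally show ?thesis by simp
  qed (use assms(3) in simp)
qed

lemma lin_rec_poly_iff: "lin_rec_poly a p \<longleftrightarrow> lead_coeff p = 1 \<and> poly_shift p a = (\<lambda>_. 0)"
  unfolding lin_rec_poly_def poly_shift_def by (auto simp: fun_eq_iff)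

lemma linearly_recurrentI:
  assumes "poly_shift p a = (\<lambda>_. 0)" and "p \<noteq> 0"
  shows "linearly_recurrent a"
proof -
  have "lin_rec_poly a (smult (inverse (lead_coeff p)) p)"
    using assms by (simp add: lin_rec_poly_iff poly_shift_smult fun_eq_iff)
  then show ?thesis unfolding linearly_recurrent_def ..
qed

lemma minimal_lin_rec_poly_dvd:
  assumes p: "lin_rec_poly a p" and minimal: "\<And>q. lin_rec_poly a q \<Longrightarrow> degree p \<le> degree q"
    and q: "poly_shift q a = (\<lambda>_. 0)"
  shows "p dvd q"
proof -
  have p0: "p \<noteq> 0" and shift_p: "poly_shift p a = (\<lambda>_. 0)"
    using p by (auto simp: lin_rec_poly_iff)
  define r where "r = q mod p"
  have "poly_shift r a n = poly_shift q a n - poly_shift (q div p * p) a n" for n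
    using poly_shift_add[of "q div p * p" r a n] by (simp add: r_def)
  then have shift_r: "poly_shift r a = (\<lambda>_. 0)"
    using q shift_p by (simp add: poly_shift_mult fun_eq_iff)
  have "r = 0"
  proof (rule ccontr)
    assume r0: "r \<noteq> 0"
    then have "lin_rec_poly a (smult (inverse (lead_coeff r)) r)"
      using shift_r by (simp add: lin_rec_poly_iff poly_shift_smult fun_eq_iff)
    then have "degree p \<le> degree r" using minimal[of "smult (inverse (lead_coeff r)) r"] r0 by simp
    moreover have "degree r < degree p" using r0 p0 by (simp add: r_def degree_mod_less')
    ultimately show False by simp
  qed
  then show ?thesis by (simp add: r_def mod_eq_0_iff_dvd)
qed

lemma normalize_monic_poly: "lead_coeff (p :: complex poly) = 1 \<Longrightarrow> normalize p = p"
  by (simp add: normalize_poly_eq_map_poly map_poly_idI)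

lemma min_poly_eqI:
  assumes p: "lin_rec_poly a p" and minimal: "\<And>q. lin_rec_poly a q \<Longrightarrow> degree p \<le> degree q"
  shows "min_poly a = p"
  unfolding min_poly_def
proof (rule the_equality)
  show "lin_rec_poly a p \<and> (\<forall>q. lin_rec_poly a q \<longrightarrow> degree p \<le> degree q)"
    using p minimal by blast
  fix p' assume "lin_rec_poly a p' \<and> (\<forall>q. lin_rec_poly a q \<longrightarrow> degree p' \<le> degree q)"
  then have p': "lin_rec_poly a p'" and minimal': "\<And>q. lin_rec_poly a q \<Longrightarrow> degree p' \<le> degree q"
    by auto
  have "poly_shift p a = (\<lambda>_. 0)" "poly_shift p' a = (\<lambda>_. 0)"
    using p p' lin_rec_poly_iff by blast+
  then have "p' dvd p" "p dvd p'"
    using minimal_lin_rec_poly_dvd[OF p minimal] minimal_lin_rec_poly_dvd[OF p' minimal'] by auto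
  moreover have "normalize p' = p'" "normalize p = p"
    using p p' normalize_monic_poly unfolding lin_rec_poly_iff by blast+
  ultimately show "p' = p" by (rule associated_eqI)
qed

lemma
  assumes "linearly_recurrent a"
  shows lin_rec_poly_min_poly: "lin_rec_poly a (min_poly a)"
    and min_poly_dvd: "poly_shift q a = (\<lambda>_. 0) \<Longrightarrow> min_poly a dvd q"
proof -
  obtain p where p: "lin_rec_poly a p" and minimal: "\<forall>q. lin_rec_poly a q \<longrightarrow> degree p \<le> degree q"
    using assms ex_has_least_nat[of "lin_rec_poly a" _ degree] unfolding linearly_recurrent_def by blast
  have "min_poly a = p" using p minimal by (intro min_poly_eqI) blast+
  then show "lin_rec_poly a (min_poly a)" and "poly_shift q a = (\<lambda>_. 0) \<Longrightarrow> min_poly a dvd q"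
    using p minimal minimal_lin_rec_poly_dvd[OF p] by simp_all
qed

lemma
  assumes "linearly_recurrent a"
  shows min_poly_monic: "lead_coeff (min_poly a) = 1"
    and poly_shift_min_poly: "poly_shift (min_poly a) a = (\<lambda>_. 0)"
    and min_poly_nonzero: "min_poly a \<noteq> 0"
  using lin_rec_poly_min_poly[OF assms] by (auto simp: lin_rec_poly_iff)

section \<open>Roots of the minimal polynomial outside the unit disc\<close>

lemma linearly_recurrent_diff:
  assumes "linearly_recurrent a" "linearly_recurrent b"
  shows "linearly_recurrent (\<lambda>n. a n - b n)"
proof (rule linearly_recurrentI)
  let ?p = "min_poly a * min_poly b"
  have "poly_shift ?p a = poly_shift (min_poly b) (poly_shift (min_poly a) a)"
    by (subst mult.commute) (rule poly_shift_mult)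
  moreover have "poly_shift ?p b = poly_shift (min_poly a) (poly_shift (min_poly b) b)"
    by (simp add: poly_shift_mult)
  ultimately have "poly_shift ?p a = (\<lambda>_. 0)" "poly_shift ?p b = (\<lambda>_. 0)"
    using assms by (simp_all add: poly_shift_min_poly)
  then show "poly_shift ?p (\<lambda>n. a n - b n) = (\<lambda>_. 0)"
    by (simp add: poly_shift_seq_diff fun_eq_iff)
  show "?p \<noteq> 0" using assms by (simp add: min_poly_nonzero)
qed

lemma bounded_poly_shift:
  assumes "\<And>n. cmod (x n) \<le> B"
  shows "cmod (poly_shift q x n) \<le> (\<Sum>i\<le>degree q. cmod (coeff q i)) * B"
proof -
  have "cmod (poly_shift q x n) \<le> (\<Sum>i\<le>degree q. cmod (coeff q i * x (n + i)))"
    unfolding poly_shift_def by (rule norm_sum)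
  also have "\<dots> \<le> (\<Sum>i\<le>degree q. cmod (coeff q i) * B)"
    using assms by (intro sum_mono) (simp add: norm_mult mult_left_mono)
  finally show ?thesis by (simp add: sum_distrib_right)
qed

lemma bounded_geometric_eq_0:
  assumes rec: "\<And>n. e (Suc n) = z * e n" and bound: "\<And>n. cmod (e n) \<le> B" and "1 < cmod z"
  shows "e 0 = 0"
proof (rule ccontr)
  assume "e 0 \<noteq> 0"
  have "e n = z ^ n * e 0" for n by (induction n) (simp_all add: rec)
  obtain n where "B / cmod (e 0) < cmod z ^ n" using real_arch_pow[OF \<open>1 < cmod z\<close>] by blast
  then have "B < cmod (e n)"
    using \<open>e 0 \<noteq> 0\<close> \<open>e n = z ^ n * e 0\<close> by (simp add: divide_less_eq norm_mult norm_power)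
  then show False using bound[of n] by simp
qed

lemma bounded_min_poly_no_root:
  assumes "linearly_recurrent c" and bound: "\<And>n. cmod (c n) \<le> B" and "1 < cmod z"
  shows "poly (min_poly c) z \<noteq> 0"
proof
  assume "poly (min_poly c) z = 0"
  then have "[:-z, 1:] dvd min_poly c" by (simp add: poly_eq_0_iff_dvd)
  then obtain q where q: "min_poly c = [:-z, 1:] * q" by (rule dvdE)
  define e where "e = poly_shift q c"
  have "poly_shift [:-z, 1:] e = poly_shift (min_poly c) c"
    by (simp only: q e_def poly_shift_mult)
  then have "poly_shift [:-z, 1:] e = (\<lambda>_. 0)"
    using poly_shift_min_poly[OF assms(1)] by simp
  then have "e (Suc n) = z * e n" for n
    using poly_shift_linear[of z e n] by (simp add: fun_eq_iff)
  then have "e 0 = 0"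
    using bounded_poly_shift[OF bound] \<open>1 < cmod z\<close> unfolding e_def by (rule bounded_geometric_eq_0)
  then have "e n = 0" for n using \<open>\<And>n. e (Suc n) = z * e n\<close> by (induction n) simp_all
  then have "min_poly c dvd q" using assms(1) by (intro min_poly_dvd) (auto simp: e_def)
  moreover have "q \<noteq> 0" using min_poly_nonzero[OF assms(1)] q by auto
  ultimately have "degree (min_poly c) \<le> degree q" by (rule dvd_imp_degree_le)
  moreover have "degree ([:-z, 1:] * q) = degree [:-z, 1:] + degree q"
    using \<open>q \<noteq> 0\<close> by (intro degree_mult_eq) simp_all
  ultimately show False unfolding q by simp
qed

lemma order_min_poly_le_if_bounded_diff:
  assumes a: "linearly_recurrent a" and b: "linearly_recurrent b"
    and bound: "\<And>n. cmod (a n - b n) \<le> B" and "1 < cmod z"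
  shows "order z (min_poly a) \<le> order z (min_poly b)"
proof -
  define c where "c n = a n - b n" for n
  have c: "linearly_recurrent c" using linearly_recurrent_diff[OF a b] by (simp add: c_def[abs_def])
  have "a = (\<lambda>n. b n + c n)" by (simp add: c_def)
  moreover have "poly_shift (min_poly b * min_poly c) b = poly_shift (min_poly c) (poly_shift (min_poly b) b)"
    by (subst mult.commute) (rule poly_shift_mult)
  moreover have "poly_shift (min_poly b * min_poly c) c = poly_shift (min_poly b) (poly_shift (min_poly c) c)"
    by (simp only: poly_shift_mult)
  ultimately have "poly_shift (min_poly b * min_poly c) a n = 0" for n
    using b c by (simp add: poly_shift_min_poly poly_shift_seq_add)
  then have "min_poly a dvd min_poly b * min_poly c" using a by (intro min_poly_dvd) auto
  moreover have nz: "min_poly b * min_poly c \<noteq> 0" using b c by (simp add: min_poly_nonzero)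
  ultimately have "order z (min_poly a) \<le> order z (min_poly b * min_poly c)"
    by (rule dvd_imp_order_le[rotated])
  also have "\<dots> = order z (min_poly b) + order z (min_poly c)"
    using nz by (rule order_mult)
  moreover have "poly (min_poly c) z \<noteq> 0"
    using bound by (intro bounded_min_poly_no_root[OF c _ \<open>1 < cmod z\<close>]) (simp add: c_def)
  then have "order z (min_poly c) = 0" by (rule order_0I)
  ultimately show ?thesis by simp
qed

section \<open>A Newton basis of solutions\<close>

text \<open>\<open>newton_seq \<mu> j m\<close> is the complete homogeneous symmetric polynomial of degree \<open>m - j\<close> in
  \<open>\<mu> 0, \<dots>, \<mu> j\<close>; the sequences \<open>newton_seq \<mu> j\<close>, \<open>j < K\<close>, form a basis of the solutions
  of \<open>\<Prod>r<K. (S - \<mu> r)\<close>, in which \<open>S ^ n\<close> has the upper triangular matrix \<open>shift_matrix \<mu> n\<close>.\<close>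
fun newton_seq :: "(nat \<Rightarrow> 'a::comm_ring_1) \<Rightarrow> nat \<Rightarrow> nat \<Rightarrow> 'a" where
  "newton_seq \<mu> j 0 = (if j = 0 then 1 else 0)"
| "newton_seq \<mu> j (Suc m) = \<mu> j * newton_seq \<mu> j m + (if j = 0 then 0 else newton_seq \<mu> (j - 1) m)"

fun shift_matrix :: "(nat \<Rightarrow> 'a::comm_ring_1) \<Rightarrow> nat \<Rightarrow> nat \<Rightarrow> nat \<Rightarrow> 'a" where
  "shift_matrix \<mu> 0 r t = (if r = t then 1 else 0)"
| "shift_matrix \<mu> (Suc n) r t =
     \<mu> t * shift_matrix \<mu> n r t + (if t = 0 then 0 else shift_matrix \<mu> n r (t - 1))"

lemma newton_seq_below_diag: "m < j \<Longrightarrow> newton_seq \<mu> j m = 0"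
  by (induction m arbitrary: j) auto

lemma newton_seq_diag: "newton_seq \<mu> j j = 1"
  by (induction j) (auto simp: newton_seq_below_diag)

lemma det_newton_seq_mat: "det (mat K K (\<lambda>(i, r). newton_seq \<mu> r i)) = 1"
proof -
  have "det (mat K K (\<lambda>(i, r). newton_seq \<mu> r i)) = prod_list (diag_mat (mat K K (\<lambda>(i, r). newton_seq \<mu> r i)))"
    by (rule det_lower_triangular[of K]) (auto simp: newton_seq_below_diag)
  also have "\<dots> = 1" by (simp add: prod_list_diag_prod newton_seq_diag)
  finally show ?thesis .
qed

lemma shift_matrix_below_diag: "t < r \<Longrightarrow> shift_matrix \<mu> n r t = 0"
  by (induction n arbitrary: t) auto

lemma shift_matrix_diag: "shift_matrix \<mu> n r r = \<mu> r ^ n"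
  by (induction n) (auto simp: shift_matrix_below_diag)

lemma newton_seq_shift:
  "t < K \<Longrightarrow> newton_seq \<mu> t (n + i) = (\<Sum>r<K. shift_matrix \<mu> n r t * newton_seq \<mu> r i)"
proof (induction n arbitrary: t)
  case 0
  then show ?case by (simp add: if_distrib[of "\<lambda>c. c * _"] sum.delta cong: if_cong)
next
  case (Suc n)
  then show ?case by (simp add: sum_distrib_left sum.distrib algebra_simps)
qed

lemma norm_shift_matrix_le:
  fixes \<mu> :: "nat \<Rightarrow> complex"
  assumes "1 \<le> R" and "\<And>i. r \<le> i \<Longrightarrow> i \<le> t \<Longrightarrow> cmod (\<mu> i) \<le> R"
  shows "cmod (shift_matrix \<mu> n r t) \<le> (real n + 1) ^ (t - r) * R ^ n"
  using assms(2)
proof (induction n arbitrary: t)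
  case (Suc n)
  consider "t < r" | "t = r" | "r < t" by linarith
  then show ?case
  proof cases
    case 1
    then show ?thesis using \<open>1 \<le> R\<close> by (simp add: shift_matrix_below_diag)
  next
    case 2
    have "cmod (\<mu> r) ^ Suc n \<le> R ^ Suc n" using Suc.prems[of r] 2 by (intro power_mono) auto
    then show ?thesis using 2 by (simp add: shift_matrix_diag norm_power norm_mult)
  next
    case 3
    define e where "e = t - r - 1"
    define x where "x = real n + 1"
    have te: "t - r = Suc e" and t1: "t - 1 - r = e" using 3 by (simp_all add: e_def)
    have IH: "cmod (shift_matrix \<mu> n r t) \<le> x ^ Suc e * R ^ n"
      "cmod (shift_matrix \<mu> n r (t - 1)) \<le> x ^ e * R ^ n"
      using Suc.IH[of t] Suc.IH[of "t - 1"] Suc.prems te t1 by (auto simp: x_def)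
    have "cmod (shift_matrix \<mu> (Suc n) r t) \<le>
        cmod (\<mu> t) * cmod (shift_matrix \<mu> n r t) + cmod (shift_matrix \<mu> n r (t - 1))"
      using 3 by (simp add: norm_mult[symmetric] norm_triangle_ineq)
    also have "\<dots> \<le> R * (x ^ Suc e * R ^ n) + x ^ e * (R * R ^ n)"
      using Suc.prems[of t] IH 3 \<open>1 \<le> R\<close>
      by (intro add_mono mult_mono order.trans[OF IH(2)]) (auto simp: x_def)
    also have "\<dots> = (x + 1) * x ^ e * R ^ Suc n" by (simp add: algebra_simps)
    also have "\<dots> \<le> (x + 1) * (x + 1) ^ e * R ^ Suc n"
      using \<open>1 \<le> R\<close> by (intro mult_right_mono mult_left_mono power_mono) (auto simp: x_def)
    finally show ?thesis by (simp add: te x_def add.commute)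
  qed
qed simp

lemma poly_shift_newton_seq:
  "poly_shift [:-\<mu> j, 1:] (newton_seq \<mu> j) n = (if j = 0 then 0 else newton_seq \<mu> (j - 1) n)"
  by (simp add: poly_shift_linear)

lemma poly_shift_prod_newton_seq:
  assumes "j < K"
  shows "poly_shift (\<Prod>r<K. [:-\<mu> r, 1:]) (newton_seq \<mu> j) = (\<lambda>_. 0)"
proof -
  have kernel: "poly_shift (\<Prod>r<Suc j. [:-\<mu> r, 1:]) (newton_seq \<mu> j) = (\<lambda>_. 0)" for j
  proof (induction j)
    case (Suc j)
    have "poly_shift [:-\<mu> (Suc j), 1:] (newton_seq \<mu> (Suc j)) = newton_seq \<mu> j"
      by (simp add: poly_shift_newton_seq fun_eq_iff)
    moreover have "poly_shift (\<Prod>r<Suc (Suc j). [:-\<mu> r, 1:]) (newton_seq \<mu> (Suc j)) =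
        poly_shift (\<Prod>r<Suc j. [:-\<mu> r, 1:]) (poly_shift [:-\<mu> (Suc j), 1:] (newton_seq \<mu> (Suc j)))"
      by (simp only: prod.lessThan_Suc[of _ "Suc j"] poly_shift_mult)
    ultimately show ?case using Suc.IH by simp
  qed (simp add: poly_shift_newton_seq fun_eq_iff)
  have "(\<Prod>r<K. [:-\<mu> r, 1:]) = (\<Prod>r\<in>{Suc j..<K}. [:-\<mu> r, 1:]) * (\<Prod>r<Suc j. [:-\<mu> r, 1:])"
    using assms by (subst prod.union_disjoint[symmetric]) (auto intro: prod.cong simp: mult.commute)
  then show ?thesis by (simp only: poly_shift_mult kernel poly_shift_zero_seq)
qed

lemma newton_seq_interpolate: "\<exists>c. \<forall>m<K. (\<Sum>s<K. c s * newton_seq \<mu> s m) = x m"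
proof (induction K)
  case (Suc K)
  then obtain c where c: "\<forall>m<K. (\<Sum>s<K. c s * newton_seq \<mu> s m) = x m" by blast
  define c' where "c' = c(K := x K - (\<Sum>s<K. c s * newton_seq \<mu> s K))"
  have "(\<Sum>s<K. c' s * newton_seq \<mu> s m) = (\<Sum>s<K. c s * newton_seq \<mu> s m)" for m
    by (rule sum.cong) (auto simp: c'_def)
  then have "(\<Sum>s<Suc K. c' s * newton_seq \<mu> s m) = x m" if "m < Suc K" for m
    using that c by (cases "m = K") (auto simp: newton_seq_diag newton_seq_below_diag c'_def)
  then show ?case by blast
qed simp

lemma newton_seq_expansion:
  fixes x :: "nat \<Rightarrow> 'a::idom"
  assumes "poly_shift (\<Prod>r<K. [:-\<mu> r, 1:]) x = (\<lambda>_. 0)"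
  obtains c where "\<And>m. x m = (\<Sum>s<K. c s * newton_seq \<mu> s m)"
proof -
  define Q where "Q = (\<Prod>r<K. [:-\<mu> r, 1:])"
  obtain c where c: "\<forall>m<K. (\<Sum>s<K. c s * newton_seq \<mu> s m) = x m"
    using newton_seq_interpolate by blast
  define y where "y = (\<lambda>m. x m - (\<Sum>s<K. c s * newton_seq \<mu> s m))"
  have "poly_shift Q x = (\<lambda>_. 0)" "\<And>s. s < K \<Longrightarrow> poly_shift Q (newton_seq \<mu> s) = (\<lambda>_. 0)"
    unfolding Q_def by (fact assms, fact poly_shift_prod_newton_seq)
  then have shift_y: "poly_shift Q y = (\<lambda>_. 0)"
    by (simp add: y_def poly_shift_seq_diff poly_shift_seq_sum fun_eq_iff)
  have monic: "lead_coeff Q = 1" by (simp add: Q_def lead_coeff_prod)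
  have init: "m < degree Q \<Longrightarrow> y m = 0" for m
    using c by (simp add: y_def Q_def degree_prod_sum_eq)
  have "y m = 0" for m by (rule annihilated_seq_eq_0[OF monic shift_y init])
  then show ?thesis using that unfolding y_def by simp
qed

definition shift_coords :: "(nat \<Rightarrow> 'a::comm_ring_1) \<Rightarrow> nat \<Rightarrow> (nat \<Rightarrow> 'a) \<Rightarrow> nat \<Rightarrow> nat \<Rightarrow> 'a" where
  "shift_coords \<mu> K c j t = (\<Sum>s<K. c s * shift_matrix \<mu> j t s)"

lemma newton_expansion_shift:
  assumes "\<And>m. x m = (\<Sum>s<K. c s * newton_seq \<mu> s m)"
  shows "x (j + m) = (\<Sum>t<K. shift_coords \<mu> K c j t * newton_seq \<mu> t m)"
proof -
  have "x (j + m) = (\<Sum>s<K. \<Sum>t<K. c s * shift_matrix \<mu> j t s * newton_seq \<mu> t m)"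
    unfolding assms by (intro sum.cong refl) (simp add: newton_seq_shift sum_distrib_left mult.assoc)
  also have "\<dots> = (\<Sum>t<K. shift_coords \<mu> K c j t * newton_seq \<mu> t m)"
    by (subst sum.swap) (simp add: shift_coords_def sum_distrib_right)
  finally show ?thesis .
qed

lemma newton_expansion_hankel:
  assumes "\<And>m. x m = (\<Sum>s<K. c s * newton_seq \<mu> s m)"
  shows "x (n + i + j) =
    (\<Sum>r<K. newton_seq \<mu> r i * (\<Sum>t<K. shift_matrix \<mu> n r t * shift_coords \<mu> K c j t))"
proof -
  have "x (n + i + j) = (\<Sum>t<K. shift_coords \<mu> K c j t * newton_seq \<mu> t (n + i))"
    using newton_expansion_shift[OF assms, of j "n + i"] by (simp add: add.commute)
  also have "\<dots> = (\<Sum>t<K. \<Sum>r<K. newton_seq \<mu> r i * (shift_matrix \<mu> n r t * shift_coords \<mu> K c j t))"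
    by (intro sum.cong refl) (simp add: newton_seq_shift sum_distrib_left mult_ac)
  also have "\<dots> = (\<Sum>r<K. newton_seq \<mu> r i * (\<Sum>t<K. shift_matrix \<mu> n r t * shift_coords \<mu> K c j t))"
    by (subst sum.swap) (simp add: sum_distrib_left)
  finally show ?thesis .
qed

section \<open>Determinant expansions\<close>

lemma det_mat_leibniz:
  "det (mat k k F) = (\<Sum>p\<in>{p. p permutes {0..<k}}. of_int (sign p) * (\<Prod>i=0..<k. F (i, p i)))"
proof -
  have "i < k \<Longrightarrow> p i < k" if "p permutes {0..<k}" for p i
    using permutes_in_image[OF that, of i] by simp
  then show ?thesis
    by (subst det_def'[of _ k]) (auto intro!: sum.cong prod.cong)
qed

lemma det_mat_mult_expand:
  fixes N :: nat
  shows "det (mat k k (\<lambda>(i, j). \<Sum>s<N. A i s * B s j)) =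
    (\<Sum>h\<in>{0..<k} \<rightarrow>\<^sub>E {..<N}. (\<Prod>i=0..<k. A i (h i)) * det (mat k k (\<lambda>(i, j). B (h i) j)))"
proof -
  let ?P = "{p. p permutes {0..<k}}" and ?H = "{0..<k} \<rightarrow>\<^sub>E {..<N}"
  have "det (mat k k (\<lambda>(i, j). \<Sum>s<N. A i s * B s j)) =
      (\<Sum>p\<in>?P. of_int (sign p) * (\<Prod>i=0..<k. \<Sum>s<N. A i s * B s (p i)))"
    by (simp add: det_mat_leibniz)
  also have "\<dots> = (\<Sum>p\<in>?P. of_int (sign p) * (\<Sum>h\<in>?H. \<Prod>i=0..<k. A i (h i) * B (h i) (p i)))"
    by (subst prod_sum_PiE) auto
  also have "\<dots> = (\<Sum>h\<in>?H. \<Sum>p\<in>?P. (\<Prod>i=0..<k. A i (h i)) * (of_int (sign p) * (\<Prod>i=0..<k. B (h i) (p i))))"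
    by (subst sum.swap) (simp add: sum_distrib_left prod.distrib algebra_simps)
  also have "\<dots> = (\<Sum>h\<in>?H. (\<Prod>i=0..<k. A i (h i)) * det (mat k k (\<lambda>(i, j). B (h i) j)))"
    by (simp add: det_mat_leibniz sum_distrib_left)
  finally show ?thesis .
qed

lemma det_mat_transpose: "det (mat k k (\<lambda>(i, j). F i j)) = det (mat k k (\<lambda>(i, j). F j i))"
proof -
  have "transpose_mat (mat k k (\<lambda>(i, j). F i j)) = mat k k (\<lambda>(i, j). F j i)"
    by (rule eq_matI) auto
  then show ?thesis using det_transpose[of "mat k k (\<lambda>(i, j). F i j)" k] by simp
qed

lemma det_mat_mult_expand_right:
  fixes N :: nat
  shows "det (mat k k (\<lambda>(i, j). \<Sum>t<N. A i t * B t j)) =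
    (\<Sum>g\<in>{0..<k} \<rightarrow>\<^sub>E {..<N}. (\<Prod>j=0..<k. B (g j) j) * det (mat k k (\<lambda>(i, j). A i (g j))))"
proof -
  have "det (mat k k (\<lambda>(i, j). \<Sum>t<N. A i t * B t j)) = det (mat k k (\<lambda>(i, j). \<Sum>t<N. B t i * A j t))"
    by (subst det_mat_transpose) (simp add: mult.commute)
  also have "\<dots> = (\<Sum>g\<in>{0..<k} \<rightarrow>\<^sub>E {..<N}. (\<Prod>i=0..<k. B (g i) i) * det (mat k k (\<lambda>(i, j). A j (g i))))"
    by (rule det_mat_mult_expand)
  finally show ?thesis by (subst (asm) det_mat_transpose) simp
qed

lemma det_mat_eq_0_if_rows_eq:
  assumes "i1 < k" "i2 < k" "i1 \<noteq> i2" "f i1 = f i2"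
  shows "det (mat k k (\<lambda>(i, j). F (f i) j)) = 0"
  by (rule det_identical_rows[of _ k i1 i2]) (use assms in \<open>auto simp: row_mat\<close>)

lemma norm_det_mat_le:
  fixes F :: "nat \<Rightarrow> nat \<Rightarrow> complex"
  assumes "\<And>i j. i < k \<Longrightarrow> j < k \<Longrightarrow> cmod (F i j) \<le> w i"
  shows "cmod (det (mat k k (\<lambda>(i, j). F i j))) \<le> fact k * (\<Prod>i=0..<k. w i)"
proof -
  let ?P = "{p. p permutes {0..<k}}"
  have sign: "\<bar>real_of_int (sign p)\<bar> = 1" for p by (simp flip: of_int_abs)
  have "cmod (det (mat k k (\<lambda>(i, j). F i j))) \<le> (\<Sum>p\<in>?P. (\<Prod>i=0..<k. cmod (F i (p i))))"
    unfolding det_mat_leibniz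
    by (rule order.trans[OF norm_sum]) (simp add: norm_mult prod_norm sign)
  also have "\<dots> \<le> (\<Sum>p\<in>?P. \<Prod>i=0..<k. w i)"
  proof (rule sum_mono, rule prod_mono)
    fix p i assume "p \<in> ?P" "i \<in> {0..<k}"
    then show "0 \<le> cmod (F i (p i)) \<and> cmod (F i (p i)) \<le> w i"
      using assms permutes_in_image[of p "{0..<k}" i] by auto
  qed
  finally show ?thesis by (simp add: card_permutations)
qed

lemma det_mat_block_triangular_product:
  assumes "K \<le> D"
    and block: "\<And>r t. r < K \<Longrightarrow> K \<le> t \<Longrightarrow> M r t = 0"
    and triangular: "\<And>r t. t < r \<Longrightarrow> r < K \<Longrightarrow> M r t = 0"
  shows "det (mat K K (\<lambda>(i, j). \<Sum>s<K. X i s * (\<Sum>t<D. M s t * Y t j))) =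
    det (mat K K (\<lambda>(i, r). X i r)) * ((\<Prod>r<K. M r r) * det (mat K K (\<lambda>(t, j). Y t j)))"
proof -
  define XB where "XB = mat K K (\<lambda>(i, r). X i r)"
  define MB where "MB = mat K K (\<lambda>(r, t). M r t)"
  define YB where "YB = mat K K (\<lambda>(t, j). Y t j)"
  have carrier: "XB \<in> carrier_mat K K" "MB \<in> carrier_mat K K" "YB \<in> carrier_mat K K"
    unfolding XB_def MB_def YB_def by auto
  have "(\<Sum>t<D. M s t * Y t j) = (\<Sum>t<K. M s t * Y t j)" if "s < K" for s j
    using block[OF that] \<open>K \<le> D\<close> by (intro sum.mono_neutral_right) auto
  then have "mat K K (\<lambda>(i, j). \<Sum>s<K. X i s * (\<Sum>t<D. M s t * Y t j)) = XB * (MB * YB)"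
    by (intro eq_matI)
       (auto simp: XB_def MB_def YB_def scalar_prod_def atLeast0LessThan intro!: sum.cong)
  moreover have "det MB = (\<Prod>r<K. M r r)"
  proof -
    have "upper_triangular MB"
      by (rule upper_triangularI) (use triangular in \<open>auto simp: MB_def\<close>)
    then have "det MB = prod_list (diag_mat MB)" using carrier(2) by (rule det_upper_triangular)
    then show ?thesis by (simp add: prod_list_diag_prod MB_def atLeast0LessThan)
  qed
  moreover have "det (XB * (MB * YB)) = det XB * (det MB * det YB)"
    using carrier by (simp add: det_mult[of _ K])
  ultimately show ?thesis by (simp add: XB_def YB_def)
qed

section \<open>Exponential growth of Hankel determinants\<close>

lemma limsup_root_le:
  fixes x :: "nat \<Rightarrow> real"
  assumes bound: "\<And>n. x n \<le> C * ((real n + 1) ^ E * P ^ n)" and "0 \<le> P"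
  shows "limsup (\<lambda>n. ereal (root n (x n))) \<le> ereal P"
proof -
  define C' where "C' = max C 1"
  define u where "u n = root n C' * (real n + 1) powr (real E / real n) * P" for n
  have "eventually (\<lambda>n. ereal (root n (x n)) \<le> ereal (u n)) sequentially"
    using eventually_gt_at_top[of 0]
  proof eventually_elim
    case (elim n)
    have "x n \<le> C' * ((real n + 1) ^ E * P ^ n)"
      using bound[of n] \<open>0 \<le> P\<close> unfolding C'_def
      by (meson max.cobounded1 mult_right_mono order.trans zero_le_mult_iff zero_le_power
          add_nonneg_nonneg of_nat_0_le_iff zero_le_one)
    then have "root n (x n) \<le> root n (C' * ((real n + 1) ^ E * P ^ n))"
      using elim by (rule real_root_le_mono[rotated])
    also have "\<dots> = root n C' * (root n ((real n + 1) ^ E) * P)"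
      using elim \<open>0 \<le> P\<close> by (simp add: real_root_mult real_root_pos2)
    also have "root n ((real n + 1) ^ E) = (real n + 1) powr (real E / real n)"
      using elim by (simp add: root_powr_inverse powr_realpow[symmetric] powr_powr)
    finally show ?case by (simp add: u_def mult.assoc)
  qed
  then have "limsup (\<lambda>n. ereal (root n (x n))) \<le> limsup (\<lambda>n. ereal (u n))"
    by (rule Limsup_mono)
  moreover have "(\<lambda>n. (real n + 1) powr (real E / real n)) \<longlonglongrightarrow> 1"
    by real_asymp
  then have "u \<longlonglongrightarrow> 1 * 1 * P"
    unfolding u_def by (intro tendsto_mult tendsto_const LIMSEQ_root_const) (simp_all add: C'_def)
  then have "limsup (\<lambda>n. ereal (u n)) = ereal P"
    by (intro lim_imp_Limsup) auto
  ultimately show ?thesis by simp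
qed

lemma limsup_root_ge:
  fixes x :: "nat \<Rightarrow> real"
  assumes "0 < c" "0 \<le> P" and "eventually (\<lambda>n. c * P ^ n \<le> x n) sequentially"
  shows "ereal P \<le> limsup (\<lambda>n. ereal (root n (x n)))"
proof -
  have "eventually (\<lambda>n. ereal (root n c * P) \<le> ereal (root n (x n))) sequentially"
    using assms(3) eventually_gt_at_top[of 0]
  proof eventually_elim
    case (elim n)
    then have "root n (c * P ^ n) \<le> root n (x n)" by (intro real_root_le_mono)
    then show ?case using elim \<open>0 \<le> P\<close> by (simp add: real_root_mult real_root_pos2)
  qed
  then have "limsup (\<lambda>n. ereal (root n c * P)) \<le> limsup (\<lambda>n. ereal (root n (x n)))"
    by (rule Limsup_mono)
  moreover have "(\<lambda>n. root n c * P) \<longlonglongrightarrow> 1 * P"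
    using \<open>0 < c\<close> by (intro tendsto_mult tendsto_const LIMSEQ_root_const)
  then have "limsup (\<lambda>n. ereal (root n c * P)) = ereal P"
    by (intro lim_imp_Limsup) auto
  ultimately show ?thesis by simp
qed

lemma mult_prod_le_prod_if_not_subset:
  fixes \<rho> :: "nat \<Rightarrow> real"
  assumes "finite S" "card S = K" "\<not> S \<subseteq> {..<K}"
    and "\<And>r. K \<le> r \<Longrightarrow> \<rho> r = 1" and "\<And>r. r < K \<Longrightarrow> \<mu> \<le> \<rho> r" and "1 \<le> \<mu>"
  shows "\<mu> * prod \<rho> S \<le> prod \<rho> {..<K}"
proof -
  define S' where "S' = S \<inter> {..<K}"
  have "prod \<rho> S = prod \<rho> S'"
    using assms(1,4) by (intro prod.mono_neutral_right) (auto simp: S'_def, metis not_less)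
  have "card S' < card S"
    using assms(1,3) by (intro psubset_card_mono) (auto simp: S'_def)
  then obtain r where r: "r < K" "r \<notin> S'"
    using assms(2) card_mono[of S' "{..<K}"] by (force simp: S'_def)
  have ge_1: "1 \<le> \<rho> i" for i using assms(4-6) by (cases "i < K") (auto intro: order.trans)
  have "\<mu> * prod \<rho> S' \<le> \<rho> r * prod \<rho> ({..<K} - {r})"
    using r assms(5-6) ge_1
    by (intro mult_mono prod_mono2) (auto simp: S'_def intro: order.trans[OF zero_le_one] prod_nonneg)
  also have "\<dots> = prod \<rho> {..<K}" using r by (simp add: prod.remove)
  finally show ?thesis using \<open>prod \<rho> S = prod \<rho> S'\<close> by simp
qed

locale hankel_factorization =
  fixes a :: "nat \<Rightarrow> complex" and D :: nat and X Y :: "nat \<Rightarrow> nat \<Rightarrow> complex"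
    and M :: "nat \<Rightarrow> nat \<Rightarrow> nat \<Rightarrow> complex" and \<rho> :: "nat \<Rightarrow> real"
  assumes hankel_entry: "a (n + i + j) = (\<Sum>r<D. X i r * (\<Sum>t<D. M n r t * Y t j))"
    and norm_M_le: "r < D \<Longrightarrow> t < D \<Longrightarrow> cmod (M n r t) \<le> (real n + 1) ^ D * \<rho> r ^ n"
    and rho_ge_1: "1 \<le> \<rho> r"
begin

lemma det_hankel_expand:
  "det (hankel a n k) = (\<Sum>f\<in>{0..<k} \<rightarrow>\<^sub>E {..<D}.
     (\<Prod>i=0..<k. X i (f i)) * det (mat k k (\<lambda>(i, j). \<Sum>t<D. M n (f i) t * Y t j)))"
proof -
  have "hankel a n k = mat k k (\<lambda>(i, j). \<Sum>r<D. X i r * (\<Sum>t<D. M n r t * Y t j))"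
    unfolding hankel_def by (simp add: hankel_entry)
  then show ?thesis by (simp add: det_mat_mult_expand)
qed

lemma norm_det_M_minor_le:
  assumes f: "f \<in> {0..<k} \<rightarrow>\<^sub>E {..<D}" and g: "g \<in> {0..<k} \<rightarrow>\<^sub>E {..<D}"
    and "0 \<le> Q" and prod_le: "inj_on f {0..<k} \<Longrightarrow> prod \<rho> (f ` {0..<k}) \<le> Q"
  shows "cmod (det (mat k k (\<lambda>(i, j). M n (f i) (g j)))) \<le> fact k * ((real n + 1) ^ (D * k) * Q ^ n)"
proof (cases "inj_on f {0..<k}")
  case True
  have "cmod (det (mat k k (\<lambda>(i, j). M n (f i) (g j)))) \<le>
      fact k * (\<Prod>i=0..<k. (real n + 1) ^ D * \<rho> (f i) ^ n)"
    using f g by (intro norm_det_mat_le norm_M_le) (auto simp: PiE_iff)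
  also have "(\<Prod>i=0..<k. (real n + 1) ^ D * \<rho> (f i) ^ n) =
      (real n + 1) ^ (D * k) * prod \<rho> (f ` {0..<k}) ^ n"
    using True by (simp add: prod.distrib power_mult prod_power_distrib prod.reindex)
  also have "fact k * \<dots> \<le> fact k * ((real n + 1) ^ (D * k) * Q ^ n)"
    using prod_le[OF True] rho_ge_1
    by (intro mult_left_mono power_mono prod_nonneg) (auto intro: order.trans[OF zero_le_one])
  finally show ?thesis .
next
  case False
  then obtain i1 i2 where "i1 < k" "i2 < k" "i1 \<noteq> i2" "f i1 = f i2" unfolding inj_on_def by auto
  then have "det (mat k k (\<lambda>(i, j). M n (f i) (g j))) = 0"
    using det_mat_eq_0_if_rows_eq[of i1 k i2 f "\<lambda>r j. M n r (g j)"] by simp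
  then show ?thesis using \<open>0 \<le> Q\<close> by simp
qed

lemma norm_det_MY_le:
  assumes "f \<in> {0..<k} \<rightarrow>\<^sub>E {..<D}" and "0 \<le> Q"
    and "inj_on f {0..<k} \<Longrightarrow> prod \<rho> (f ` {0..<k}) \<le> Q"
  shows "cmod (det (mat k k (\<lambda>(i, j). \<Sum>t<D. M n (f i) t * Y t j))) \<le>
    (\<Sum>g\<in>{0..<k} \<rightarrow>\<^sub>E {..<D}. cmod (\<Prod>j=0..<k. Y (g j) j)) * fact k * ((real n + 1) ^ (D * k) * Q ^ n)"
proof -
  let ?G = "{0..<k} \<rightarrow>\<^sub>E {..<D}"
  have "cmod (det (mat k k (\<lambda>(i, j). \<Sum>t<D. M n (f i) t * Y t j))) \<le>
      (\<Sum>g\<in>?G. cmod (\<Prod>j=0..<k. Y (g j) j) * cmod (det (mat k k (\<lambda>(i, j). M n (f i) (g j)))))"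
    unfolding det_mat_mult_expand_right by (rule order.trans[OF norm_sum]) (simp add: norm_mult)
  also have "\<dots> \<le> (\<Sum>g\<in>?G. cmod (\<Prod>j=0..<k. Y (g j) j) * (fact k * ((real n + 1) ^ (D * k) * Q ^ n)))"
    using assms by (intro sum_mono mult_left_mono norm_det_M_minor_le) auto
  finally show ?thesis by (simp add: sum_distrib_right mult.assoc)
qed

lemma norm_det_hankel_le:
  assumes "0 \<le> Q"
    and "\<And>f. f \<in> F \<Longrightarrow> inj_on f {0..<k} \<Longrightarrow> prod \<rho> (f ` {0..<k}) \<le> Q"
    and "F \<subseteq> {0..<k} \<rightarrow>\<^sub>E {..<D}"
  shows "cmod (\<Sum>f\<in>F. (\<Prod>i=0..<k. X i (f i)) * det (mat k k (\<lambda>(i, j). \<Sum>t<D. M n (f i) t * Y t j))) \<le>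
    (\<Sum>f\<in>F. cmod (\<Prod>i=0..<k. X i (f i))) * (\<Sum>g\<in>{0..<k} \<rightarrow>\<^sub>E {..<D}. cmod (\<Prod>j=0..<k. Y (g j) j)) *
      fact k * ((real n + 1) ^ (D * k) * Q ^ n)"
proof -
  let ?W = "(\<Sum>g\<in>{0..<k} \<rightarrow>\<^sub>E {..<D}. cmod (\<Prod>j=0..<k. Y (g j) j)) * fact k * ((real n + 1) ^ (D * k) * Q ^ n)"
  have "cmod (\<Sum>f\<in>F. (\<Prod>i=0..<k. X i (f i)) * det (mat k k (\<lambda>(i, j). \<Sum>t<D. M n (f i) t * Y t j))) \<le>
      (\<Sum>f\<in>F. cmod (\<Prod>i=0..<k. X i (f i)) * cmod (det (mat k k (\<lambda>(i, j). \<Sum>t<D. M n (f i) t * Y t j))))"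
    by (rule order.trans[OF norm_sum]) (simp add: norm_mult)
  also have "\<dots> \<le> (\<Sum>f\<in>F. cmod (\<Prod>i=0..<k. X i (f i)) * ?W)"
    using assms by (intro sum_mono mult_left_mono norm_det_MY_le) auto
  finally show ?thesis by (simp add: sum_distrib_right mult.assoc)
qed

lemma GR_le: "GR k a \<le> ereal (\<Prod>r<D. \<rho> r)"
proof (cases "k = 0")
  case True
  then show ?thesis using rho_ge_1 by (simp add: GR_def prod_ge_1)
next
  case False
  define P where "P = (\<Prod>r<D. \<rho> r)"
  have "1 \<le> P" using rho_ge_1 by (simp add: P_def prod_ge_1)
  have "prod \<rho> (f ` {0..<k}) \<le> P" if "f \<in> {0..<k} \<rightarrow>\<^sub>E {..<D}" for f
    unfolding P_def using that rho_ge_1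
    by (intro prod_mono2) (auto simp: PiE_iff intro: order.trans[OF zero_le_one])
  then have "cmod (det (hankel a n k)) \<le>
      (\<Sum>f\<in>{0..<k} \<rightarrow>\<^sub>E {..<D}. cmod (\<Prod>i=0..<k. X i (f i))) *
      (\<Sum>g\<in>{0..<k} \<rightarrow>\<^sub>E {..<D}. cmod (\<Prod>j=0..<k. Y (g j) j)) * fact k * ((real n + 1) ^ (D * k) * P ^ n)"
    for n
    unfolding det_hankel_expand using \<open>1 \<le> P\<close> by (intro norm_det_hankel_le) auto
  then have "limsup (\<lambda>n. ereal (root n (cmod (det (hankel a n k))))) \<le> ereal P"
    using \<open>1 \<le> P\<close> by (intro limsup_root_le) auto
  then show ?thesis using False by (simp add: GR_def P_def)
qed

end

locale dominant_hankel_factorization = hankel_factorization +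
  fixes K :: nat
  assumes K_le_D: "K \<le> D"
    and M_block_zero: "r < K \<Longrightarrow> K \<le> t \<Longrightarrow> M n r t = 0"
    and M_triangular: "t < r \<Longrightarrow> r < K \<Longrightarrow> M n r t = 0"
    and norm_M_diag: "r < K \<Longrightarrow> cmod (M n r r) = \<rho> r ^ n"
    and rho_gt_1: "r < K \<Longrightarrow> 1 < \<rho> r"
    and rho_eq_1: "K \<le> r \<Longrightarrow> \<rho> r = 1"
    and det_X_nonzero: "det (mat K K (\<lambda>(i, r). X i r)) \<noteq> 0"
    and det_Y_nonzero: "det (mat K K (\<lambda>(t, j). Y t j)) \<noteq> 0"
begin

lemma norm_det_hankel_main_part:
  "cmod (\<Sum>f\<in>{0..<K} \<rightarrow>\<^sub>E {..<K}. (\<Prod>i=0..<K. X i (f i)) * det (mat K K (\<lambda>(i, j). \<Sum>t<D. M n (f i) t * Y t j))) =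
    cmod (det (mat K K (\<lambda>(i, r). X i r))) * cmod (det (mat K K (\<lambda>(t, j). Y t j))) * (\<Prod>r<K. \<rho> r) ^ n"
proof -
  have "(\<Sum>f\<in>{0..<K} \<rightarrow>\<^sub>E {..<K}. (\<Prod>i=0..<K. X i (f i)) * det (mat K K (\<lambda>(i, j). \<Sum>t<D. M n (f i) t * Y t j))) =
      det (mat K K (\<lambda>(i, j). \<Sum>s<K. X i s * (\<Sum>t<D. M n s t * Y t j)))"
    by (rule det_mat_mult_expand[symmetric])
  also have "\<dots> = det (mat K K (\<lambda>(i, r). X i r)) * ((\<Prod>r<K. M n r r) * det (mat K K (\<lambda>(t, j). Y t j)))"
    using K_le_D M_block_zero M_triangular by (rule det_mat_block_triangular_product)
  moreover have "cmod (\<Prod>r<K. M n r r) = (\<Prod>r<K. \<rho> r) ^ n"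
    by (simp add: prod_norm[symmetric] norm_M_diag prod_power_distrib)
  ultimately show ?thesis by (simp add: norm_mult)
qed

lemma norm_det_hankel_rest_le:
  assumes "0 < K"
  obtains \<mu> C where "1 < \<mu>" and "\<And>n. cmod (\<Sum>f\<in>({0..<K} \<rightarrow>\<^sub>E {..<D}) - ({0..<K} \<rightarrow>\<^sub>E {..<K}).
      (\<Prod>i=0..<K. X i (f i)) * det (mat K K (\<lambda>(i, j). \<Sum>t<D. M n (f i) t * Y t j)))
    \<le> C * ((real n + 1) ^ (D * K) * ((\<Prod>r<K. \<rho> r) / \<mu>) ^ n)"
proof -
  define \<mu> where "\<mu> = Min (\<rho> ` {..<K})"
  have "1 < \<mu>" unfolding \<mu>_def using assms rho_gt_1 by (subst Min_gr_iff) auto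
  let ?F = "({0..<K} \<rightarrow>\<^sub>E {..<D}) - ({0..<K} \<rightarrow>\<^sub>E {..<K})"
  txt \<open>A minor of \<open>M n\<close> using a row \<open>r \<ge> K\<close> misses a dominant row, losing a factor \<open>\<mu>\<close>.\<close>
  have "prod \<rho> (f ` {0..<K}) \<le> (\<Prod>r<K. \<rho> r) / \<mu>"
    if "f \<in> ({0..<K} \<rightarrow>\<^sub>E {..<D}) - ({0..<K} \<rightarrow>\<^sub>E {..<K})" "inj_on f {0..<K}" for f
  proof -
    have "\<not> f ` {0..<K} \<subseteq> {..<K}" using that(1) by (auto simp: PiE_iff)
    then have "\<mu> * prod \<rho> (f ` {0..<K}) \<le> (\<Prod>r<K. \<rho> r)"
      using that(2) \<open>1 < \<mu>\<close> rho_eq_1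
      by (intro mult_prod_le_prod_if_not_subset) (auto simp: card_image \<mu>_def)
    then show ?thesis using \<open>1 < \<mu>\<close> by (simp add: field_simps)
  qed
  moreover have "0 \<le> (\<Prod>r<K. \<rho> r) / \<mu>"
    using \<open>1 < \<mu>\<close> rho_ge_1 by (intro divide_nonneg_pos prod_nonneg) (auto intro: order.trans[OF zero_le_one])
  ultimately show ?thesis
    using norm_det_hankel_le[of "(\<Prod>r<K. \<rho> r) / \<mu>" ?F K] by (intro that[OF \<open>1 < \<mu>\<close>]) blast
qed

lemma eventually_norm_det_hankel_ge:
  assumes "0 < K"
  defines "c \<equiv> cmod (det (mat K K (\<lambda>(i, r). X i r))) * cmod (det (mat K K (\<lambda>(t, j). Y t j)))"
  shows "eventually (\<lambda>n. c / 2 * (\<Prod>r<K. \<rho> r) ^ n \<le> cmod (det (hankel a n K))) sequentially"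
proof -
  define P where "P = (\<Prod>r<K. \<rho> r)"
  define Z where "Z n f = (\<Prod>i=0..<K. X i (f i)) * det (mat K K (\<lambda>(i, j). \<Sum>t<D. M n (f i) t * Y t j))" for n f
  let ?F = "{0..<K} \<rightarrow>\<^sub>E {..<D}" and ?Fk = "{0..<K} \<rightarrow>\<^sub>E {..<K}"
  have "0 < c" "1 \<le> P" using det_X_nonzero det_Y_nonzero rho_ge_1 by (simp_all add: c_def P_def prod_ge_1)
  obtain \<mu> C where "1 < \<mu>" and rest: "\<And>n. cmod (\<Sum>f\<in>?F - ?Fk. Z n f) \<le> C * ((real n + 1) ^ (D * K) * (P / \<mu>) ^ n)"
    using norm_det_hankel_rest_le assms unfolding Z_def P_def by blast
  have "(\<lambda>n. (real n + 1) ^ (D * K) / \<mu> ^ n) \<longlonglongrightarrow> 0"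
    using \<open>1 < \<mu>\<close> by real_asymp
  then have "(\<lambda>n. C * ((real n + 1) ^ (D * K) / \<mu> ^ n)) \<longlonglongrightarrow> 0"
    by (intro tendsto_mult_right_zero)
  then have "eventually (\<lambda>n. C * ((real n + 1) ^ (D * K) / \<mu> ^ n) < c / 2) sequentially"
    using \<open>0 < c\<close> by (intro order_tendstoD) auto
  then show ?thesis unfolding P_def[symmetric]
  proof eventually_elim
    case (elim n)
    have "?Fk \<subseteq> ?F" using K_le_D by (force simp: PiE_iff)
    then have "det (hankel a n K) = (\<Sum>f\<in>?F - ?Fk. Z n f) + (\<Sum>f\<in>?Fk. Z n f)"
      unfolding det_hankel_expand Z_def by (intro sum.subset_diff) (auto intro: finite_PiE)
    moreover have "cmod (\<Sum>f\<in>?Fk. Z n f) = c * P ^ n"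
      unfolding Z_def c_def P_def by (rule norm_det_hankel_main_part)
    moreover have "cmod (\<Sum>f\<in>?F - ?Fk. Z n f) \<le> c / 2 * P ^ n"
    proof -
      have "C * ((real n + 1) ^ (D * K) * (P / \<mu>) ^ n) = C * ((real n + 1) ^ (D * K) / \<mu> ^ n) * P ^ n"
        by (simp add: power_divide)
      also have "\<dots> \<le> c / 2 * P ^ n" using elim \<open>1 \<le> P\<close> by (intro mult_right_mono) auto
      finally show ?thesis using rest[of n] by linarith
    qed
    ultimately show ?case using norm_diff_ineq[of "\<Sum>f\<in>?Fk. Z n f" "\<Sum>f\<in>?F - ?Fk. Z n f"]
      by (simp add: add.commute)
  qed
qed

lemma GR_ge: "ereal (\<Prod>r<K. \<rho> r) \<le> GR K a"
proof (cases "K = 0")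
  case False
  define c where "c = cmod (det (mat K K (\<lambda>(i, r). X i r))) * cmod (det (mat K K (\<lambda>(t, j). Y t j)))"
  have "0 < c" using det_X_nonzero det_Y_nonzero by (simp add: c_def)
  moreover have "0 \<le> (\<Prod>r<K. \<rho> r)" using rho_ge_1 by (simp add: prod_ge_1 order.trans[OF zero_le_one])
  moreover have "eventually (\<lambda>n. c / 2 * (\<Prod>r<K. \<rho> r) ^ n \<le> cmod (det (hankel a n K))) sequentially"
    using eventually_norm_det_hankel_ge False by (simp add: c_def)
  ultimately have "ereal (\<Prod>r<K. \<rho> r) \<le> limsup (\<lambda>n. ereal (root n (cmod (det (hankel a n K)))))"
    by (intro limsup_root_ge[of "c / 2"]) auto
  then show ?thesis using False by (simp add: GR_def)
qed (simp add: GR_def)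

theorem SUP_GR_eq: "(SUP k. GR k a) = ereal (\<Prod>r<K. \<rho> r)"
proof (rule antisym)
  have "(\<Prod>r<D. \<rho> r) = (\<Prod>r<K. \<rho> r)"
    using K_le_D rho_eq_1 by (intro prod.mono_neutral_right) auto
  then show "(SUP k. GR k a) \<le> ereal (\<Prod>r<K. \<rho> r)"
    using GR_le by (intro SUP_least) simp
  show "ereal (\<Prod>r<K. \<rho> r) \<le> (SUP k. GR k a)"
    using GR_ge by (rule order.trans) (rule SUP_upper, simp)
qed

end

section \<open>The maximal Hankel growth rate of a linear recurrence\<close>

lemma coprime_if_no_common_root:
  fixes p q :: "'a::alg_closed_field poly"
  assumes "p \<noteq> 0" and "\<And>z. poly p z = 0 \<Longrightarrow> poly q z \<noteq> 0"
  shows "coprime p q"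
proof (rule coprimeI)
  fix d assume "d dvd p" "d dvd q"
  have "degree d = 0"
  proof (rule ccontr)
    assume "degree d \<noteq> 0"
    then obtain z where "poly d z = 0" using alg_closed_imp_poly_has_root by blast
    then have "poly p z = 0" "poly q z = 0"
      using \<open>d dvd p\<close> \<open>d dvd q\<close> by (auto simp: poly_eq_0_iff_dvd intro: dvd_trans)
    then show False using assms(2) by blast
  qed
  moreover have "d \<noteq> 0" using \<open>d dvd p\<close> assms(1) by auto
  ultimately show "is_unit d" by (simp add: is_unit_iff_degree)
qed

lemma poly_shift_coprime_split:
  fixes p q :: "complex poly"
  assumes "coprime p q" and "poly_shift (p * q) a = (\<lambda>_. 0)"
  obtains a1 a2 where "\<And>n. a n = a1 n + a2 n" "poly_shift p a1 = (\<lambda>_. 0)" "poly_shift q a2 = (\<lambda>_. 0)"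
proof -
  obtain u v where uv: "u * p + v * q = 1"
    using bezout_coefficients_fst_snd[of p q] assms(1) by (metis coprime_imp_gcd_eq_1)
  show ?thesis
  proof
    show "a n = poly_shift (v * q) a n + poly_shift (u * p) a n" for n
      using poly_shift_add[of "u * p" "v * q" a n] uv by simp
    have "poly_shift p (poly_shift (v * q) a) = poly_shift v (poly_shift (p * q) a)"
      by (simp add: poly_shift_mult[symmetric] mult_ac)
    then show "poly_shift p (poly_shift (v * q) a) = (\<lambda>_. 0)" using assms(2) by simp
    have "poly_shift q (poly_shift (u * p) a) = poly_shift u (poly_shift (p * q) a)"
      by (simp add: poly_shift_mult[symmetric] mult_ac)
    then show "poly_shift q (poly_shift (u * p) a) = (\<lambda>_. 0)" using assms(2) by simp
  qed
qed

text \<open>For monic \<open>p\<close>, \<open>\<Prod>z\<in>#outer_roots p. cmod z\<close> is the Mahler measure of \<open>p\<close>.\<close>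
definition outer_roots :: "complex poly \<Rightarrow> complex multiset" where
  "outer_roots p = filter_mset (\<lambda>z. 1 < cmod z) (proots p)"

lemma prod_nth_eq_prod_mset: "(\<Prod>r<length xs. f (xs ! r)) = (\<Prod>x\<in>#mset xs. f x)"
proof -
  have "(\<Prod>x\<in>#mset xs. f x) = prod_list (map f xs)"
    by (simp flip: mset_map add: prod_mset_prod_list)
  also have "\<dots> = (\<Prod>r<length xs. f (xs ! r))"
    by (simp add: prod.list_conv_set_nth atLeast0LessThan)
  finally show ?thesis ..
qed

lemma monic_poly_outer_inner_factorization:
  fixes p :: "complex poly"
  assumes "lead_coeff p = 1"
  obtains \<mu>1 K \<mu>2 L where "p = (\<Prod>r<(K::nat). [:-\<mu>1 r, 1:]) * (\<Prod>r<(L::nat). [:-\<mu>2 r, 1:])"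
    and "\<And>r. r < K \<Longrightarrow> 1 < cmod (\<mu>1 r)" and "\<And>r. r < L \<Longrightarrow> cmod (\<mu>2 r) \<le> 1"
    and "\<And>r s. r \<le> s \<Longrightarrow> s < K \<Longrightarrow> cmod (\<mu>1 s) \<le> cmod (\<mu>1 r)"
    and "(\<Prod>r<K. cmod (\<mu>1 r)) = (\<Prod>z\<in>#outer_roots p. cmod z)"
proof -
  define inner where "inner = filter_mset (\<lambda>z. \<not> 1 < cmod z) (proots p)"
  obtain bs where bs: "mset bs = outer_roots p" using ex_mset by blast
  obtain ss where ss: "mset ss = inner" using ex_mset by blast
  define bs' where "bs' = sort_key (\<lambda>z. - cmod z) bs"
  have bs': "mset bs' = outer_roots p" by (simp add: bs'_def bs)
  have "p = (\<Prod>z\<in>#proots p. [:-z, 1:])"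
    using complex_poly_decompose_multiset[of p] assms by simp
  also have "proots p = outer_roots p + inner"
    unfolding outer_roots_def inner_def by (rule multiset_partition)
  finally have "p = (\<Prod>r<length bs'. [:-bs' ! r, 1:]) * (\<Prod>r<length ss. [:-ss ! r, 1:])"
    unfolding prod_nth_eq_prod_mset[where xs = bs' and f = "\<lambda>z. [:-z, 1:]"]
      prod_nth_eq_prod_mset[where xs = ss and f = "\<lambda>z. [:-z, 1:]"]
    by (simp add: bs' ss)
  moreover have "1 < cmod (bs' ! r)" if "r < length bs'" for r
    using nth_mem[OF that] set_mset_mset[of bs'] by (auto simp: bs' outer_roots_def)
  moreover have "cmod (ss ! r) \<le> 1" if "r < length ss" for r
    using nth_mem[OF that] set_mset_mset[of ss] by (auto simp: ss inner_def not_less)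
  moreover have "cmod (bs' ! s) \<le> cmod (bs' ! r)" if "r \<le> s" "s < length bs'" for r s
    using sorted_nth_mono[OF sorted_sort_key[of "\<lambda>z. - cmod z" bs], of r s] that by (simp add: bs'_def)
  moreover have "(\<Prod>r<length bs'. cmod (bs' ! r)) = (\<Prod>z\<in>#outer_roots p. cmod z)"
    unfolding prod_nth_eq_prod_mset[where xs = bs' and f = cmod] bs' ..
  ultimately show ?thesis by (intro that) auto
qed

lemma det_shift_coords_nonzero:
  fixes x :: "nat \<Rightarrow> complex"
  assumes x: "\<And>m. x m = (\<Sum>s<K. c s * newton_seq \<mu> s m)"
    and minimal: "\<And>W. poly_shift W x = (\<lambda>_. 0) \<Longrightarrow> W \<noteq> 0 \<Longrightarrow> K \<le> degree W"
  shows "det (mat K K (\<lambda>(t, j). shift_coords \<mu> K c j t)) \<noteq> 0"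
proof
  define YB where "YB = mat K K (\<lambda>(t, j). shift_coords \<mu> K c j t)"
  assume "det (mat K K (\<lambda>(t, j). shift_coords \<mu> K c j t)) = 0"
  then obtain w where w: "w \<in> carrier_vec K" "w \<noteq> 0\<^sub>v K" "YB *\<^sub>v w = 0\<^sub>v K"
    using det_0_iff_vec_prod_zero_field[of YB K] by (auto simp: YB_def)
  have kernel: "(\<Sum>j<K. shift_coords \<mu> K c j t * w $ j) = 0" if "t < K" for t
    using arg_cong[OF w(3), of "\<lambda>v. v $ t"] that w(1)
    by (simp add: YB_def scalar_prod_def atLeast0LessThan)
  txt \<open>The kernel vector \<open>w\<close> yields an annihilator of \<open>x\<close> of degree \<open>< K\<close>.\<close>
  define W where "W = (\<Sum>j<K. monom (w $ j) j)"
  have coeff_W: "coeff W i = (if i < K then w $ i else 0)" for i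
    unfolding W_def coeff_sum by (simp add: coeff_monom)
  obtain j0 where "j0 < K" "w $ j0 \<noteq> 0" using w(1,2) by (metis carrier_vecD eq_vecI index_zero_vec)
  then have "W \<noteq> 0" using coeff_W[of j0] by auto
  have "poly_shift W x m = 0" for m
  proof -
    have "poly_shift W x m = (\<Sum>j<K. w $ j * (\<Sum>t<K. shift_coords \<mu> K c j t * newton_seq \<mu> t m))"
      unfolding W_def poly_shift_sum_monom using newton_expansion_shift[OF x]
      by (simp add: add.commute)
    also have "\<dots> = (\<Sum>t<K. newton_seq \<mu> t m * (\<Sum>j<K. shift_coords \<mu> K c j t * w $ j))"
      unfolding sum_distrib_left by (subst sum.swap) (simp add: mult_ac)
    finally show ?thesis using kernel by simp
  qed
  then have "K \<le> degree W" using minimal \<open>W \<noteq> 0\<close> by auto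
  moreover have "degree W < K" using \<open>W \<noteq> 0\<close> coeff_W by (intro degree_lessI) auto
  ultimately show False by simp
qed

lemma sum_lessThan_add:
  fixes K L :: nat
  shows "(\<Sum>r<K + L. f r) = (\<Sum>r<K. f r) + (\<Sum>r<L. f (K + r))"
  by (induction L) (simp_all add: add.assoc)

definition block_diag :: "nat \<Rightarrow> (nat \<Rightarrow> nat \<Rightarrow> 'a::zero) \<Rightarrow> (nat \<Rightarrow> nat \<Rightarrow> 'a) \<Rightarrow> nat \<Rightarrow> nat \<Rightarrow> 'a" where
  "block_diag K A B r t =
     (if r < K \<and> t < K then A r t else if K \<le> r \<and> K \<le> t then B (r - K) (t - K) else 0)"

lemma norm_block_diag_shift_matrix_le:
  fixes \<mu>1 \<mu>2 :: "nat \<Rightarrow> complex"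
  assumes big: "\<And>r. r < K \<Longrightarrow> 1 < cmod (\<mu>1 r)"
    and decreasing: "\<And>r s. r \<le> s \<Longrightarrow> s < K \<Longrightarrow> cmod (\<mu>1 s) \<le> cmod (\<mu>1 r)"
    and small: "\<And>r. r < L \<Longrightarrow> cmod (\<mu>2 r) \<le> 1"
    and "r < K + L" "t < K + L"
  shows "cmod (block_diag K (shift_matrix \<mu>1 n) (shift_matrix \<mu>2 n) r t) \<le>
    (real n + 1) ^ (K + L) * (if r < K then cmod (\<mu>1 r) else 1) ^ n"
proof -
  have n_pow: "(real n + 1) ^ e \<le> (real n + 1) ^ (K + L)" if "e \<le> K + L" for e
    using that by (intro power_increasing) auto
  consider "r < K" "t < K" | "K \<le> r" "K \<le> t" | "\<not> (r < K \<and> t < K)" "\<not> (K \<le> r \<and> K \<le> t)"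
    by blast
  then show ?thesis
  proof cases
    case 1
    have "cmod (shift_matrix \<mu>1 n r t) \<le> (real n + 1) ^ (t - r) * cmod (\<mu>1 r) ^ n"
      using 1 big decreasing by (intro norm_shift_matrix_le) (auto intro: less_imp_le)
    also have "\<dots> \<le> (real n + 1) ^ (K + L) * cmod (\<mu>1 r) ^ n"
      using n_pow[of "t - r"] \<open>t < K + L\<close> by (intro mult_right_mono) auto
    finally show ?thesis using 1 by (simp add: block_diag_def)
  next
    case 2
    have "cmod (shift_matrix \<mu>2 n (r - K) (t - K)) \<le> (real n + 1) ^ (t - K - (r - K)) * 1 ^ n"
      using 2 assms(4,5) small by (intro norm_shift_matrix_le) auto
    also have "\<dots> \<le> (real n + 1) ^ (K + L)" using n_pow[of "t - K - (r - K)"] assms(5) by simp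
    finally show ?thesis using 2 by (simp add: block_diag_def)
  next
    case 3
    then have "block_diag K (shift_matrix \<mu>1 n) (shift_matrix \<mu>2 n) r t = 0"
      unfolding block_diag_def by auto
    then show ?thesis by simp
  qed
qed

lemma SUP_GR_two_newton_blocks:
  fixes \<mu>1 \<mu>2 c1 c2 a1 a2 :: "nat \<Rightarrow> complex"
  assumes big: "\<And>r. r < K \<Longrightarrow> 1 < cmod (\<mu>1 r)"
    and decreasing: "\<And>r s. r \<le> s \<Longrightarrow> s < K \<Longrightarrow> cmod (\<mu>1 s) \<le> cmod (\<mu>1 r)"
    and small: "\<And>r. r < L \<Longrightarrow> cmod (\<mu>2 r) \<le> 1"
    and a: "\<And>n. a n = a1 n + a2 n"
    and a1: "\<And>m. a1 m = (\<Sum>s<K. c1 s * newton_seq \<mu>1 s m)"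
    and a2: "\<And>m. a2 m = (\<Sum>s<L. c2 s * newton_seq \<mu>2 s m)"
    and nondegenerate: "det (mat K K (\<lambda>(t, j). shift_coords \<mu>1 K c1 j t)) \<noteq> 0"
  shows "(SUP k. GR k a) = ereal (\<Prod>r<K. cmod (\<mu>1 r))"
proof -
  define X where "X i r = (if r < K then newton_seq \<mu>1 r i else newton_seq \<mu>2 (r - K) i)" for i r
  define M where "M n = block_diag K (shift_matrix \<mu>1 n) (shift_matrix \<mu>2 n)" for n
  define Y where "Y t j = (if t < K then shift_coords \<mu>1 K c1 j t else shift_coords \<mu>2 L c2 j (t - K))"
    for t j
  define \<rho> where "\<rho> r = (if r < K then cmod (\<mu>1 r) else 1)" for r
  have "a (n + i + j) = (\<Sum>r<K + L. X i r * (\<Sum>t<K + L. M n r t * Y t j))" for n i j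
    using a newton_expansion_hankel[OF a1, of n i j] newton_expansion_hankel[OF a2, of n i j]
    by (simp add: sum_lessThan_add X_def M_def Y_def block_diag_def)
  moreover have "cmod (M n r t) \<le> (real n + 1) ^ (K + L) * \<rho> r ^ n" if "r < K + L" "t < K + L" for n r t
    unfolding M_def \<rho>_def using big decreasing small that by (rule norm_block_diag_shift_matrix_le)
  moreover have "M n r t = 0" if "r < K" "K \<le> t" for n r t
    using that by (simp add: M_def block_diag_def)
  moreover have "M n r t = 0" if "t < r" "r < K" for n r t
    using that by (simp add: M_def block_diag_def shift_matrix_below_diag)
  moreover have "cmod (M n r r) = \<rho> r ^ n" if "r < K" for n r
    using that by (simp add: M_def block_diag_def \<rho>_def shift_matrix_diag norm_power)
  moreover have "mat K K (\<lambda>(i, r). X i r) = mat K K (\<lambda>(i, r). newton_seq \<mu>1 r i)"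
    by (rule eq_matI) (auto simp: X_def)
  moreover have "mat K K (\<lambda>(t, j). Y t j) = mat K K (\<lambda>(t, j). shift_coords \<mu>1 K c1 j t)"
    by (rule eq_matI) (auto simp: Y_def)
  ultimately interpret dominant_hankel_factorization a "K + L" X Y M \<rho> K
    using big nondegenerate det_newton_seq_mat[of K \<mu>1]
    by unfold_locales (auto simp: \<rho>_def less_imp_le)
  show ?thesis using SUP_GR_eq by (simp add: \<rho>_def)
qed

lemma degree_annihilator_of_component_ge:
  assumes "linearly_recurrent a" and "min_poly a = p * q" and "q \<noteq> 0"
    and "\<And>n. a n = a1 n + a2 n" and "poly_shift q a2 = (\<lambda>_. 0)"
    and "poly_shift W a1 = (\<lambda>_. 0)" and "W \<noteq> 0"
  shows "degree p \<le> degree W"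
proof -
  have "a = (\<lambda>n. a1 n + a2 n)" using assms(4) by auto
  then have "poly_shift q a n = poly_shift q a1 n" for n
    using assms(5) by (simp add: poly_shift_seq_add)
  then have "poly_shift q a = poly_shift q a1" ..
  then have "poly_shift (W * q) a = (\<lambda>_. 0)"
    using assms(6) by (simp add: poly_shift_mult poly_shift_commute[of W])
  then have "p * q dvd W * q" unfolding assms(2)[symmetric] by (rule min_poly_dvd[OF assms(1)])
  then have "p dvd W" using \<open>q \<noteq> 0\<close> by simp
  then show ?thesis using \<open>W \<noteq> 0\<close> by (rule dvd_imp_degree_le)
qed

theorem SUP_GR_eq_outer_roots:
  assumes "linearly_recurrent a"
  shows "(SUP k. GR k a) = ereal (\<Prod>z\<in>#outer_roots (min_poly a). cmod z)"
proof -
  obtain \<mu>1 K \<mu>2 L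
    where factor: "min_poly a = (\<Prod>r<(K::nat). [:-\<mu>1 r, 1:]) * (\<Prod>r<(L::nat). [:-\<mu>2 r, 1:])"
      and big: "\<And>r. r < K \<Longrightarrow> 1 < cmod (\<mu>1 r)" and small: "\<And>r. r < L \<Longrightarrow> cmod (\<mu>2 r) \<le> 1"
      and decreasing: "\<And>r s. r \<le> s \<Longrightarrow> s < K \<Longrightarrow> cmod (\<mu>1 s) \<le> cmod (\<mu>1 r)"
      and measure: "(\<Prod>r<K. cmod (\<mu>1 r)) = (\<Prod>z\<in>#outer_roots (min_poly a). cmod z)"
    using monic_poly_outer_inner_factorization[OF min_poly_monic[OF assms]] by blast
  define pb where "pb = (\<Prod>r<K. [:-\<mu>1 r, 1:])"
  define ps where "ps = (\<Prod>r<L. [:-\<mu>2 r, 1:])"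
  have "poly pb z = 0 \<Longrightarrow> \<exists>r<K. z = \<mu>1 r" "poly ps z = 0 \<Longrightarrow> \<exists>r<L. z = \<mu>2 r" for z
    unfolding pb_def ps_def poly_prod by (auto simp: prod_zero_iff)
  then have "poly pb z = 0 \<Longrightarrow> 1 < cmod z" "poly ps z = 0 \<Longrightarrow> cmod z \<le> 1" for z
    using big small by blast+
  moreover have "pb \<noteq> 0" by (simp add: pb_def)
  ultimately have "coprime pb ps" by (intro coprime_if_no_common_root) force+
  moreover have "poly_shift (pb * ps) a = (\<lambda>_. 0)"
    using poly_shift_min_poly[OF assms] by (simp add: factor pb_def ps_def)
  ultimately obtain a1 a2 where a: "\<And>n. a n = a1 n + a2 n"
    and a1: "poly_shift pb a1 = (\<lambda>_. 0)" and a2: "poly_shift ps a2 = (\<lambda>_. 0)"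
    using poly_shift_coprime_split by blast
  obtain c1 where c1: "\<And>m. a1 m = (\<Sum>s<K. c1 s * newton_seq \<mu>1 s m)"
    using a1 newton_seq_expansion unfolding pb_def by blast
  obtain c2 where c2: "\<And>m. a2 m = (\<Sum>s<L. c2 s * newton_seq \<mu>2 s m)"
    using a2 newton_seq_expansion unfolding ps_def by blast
  have "min_poly a = pb * ps" "ps \<noteq> 0" by (simp_all add: factor pb_def ps_def)
  then have "degree pb \<le> degree W" if "poly_shift W a1 = (\<lambda>_. 0)" "W \<noteq> 0" for W
    by (rule degree_annihilator_of_component_ge[OF assms _ _ a a2 that])
  then have "K \<le> degree W" if "poly_shift W a1 = (\<lambda>_. 0)" "W \<noteq> 0" for W
    using that by (simp add: pb_def degree_prod_sum_eq)
  then have "det (mat K K (\<lambda>(t, j). shift_coords \<mu>1 K c1 j t)) \<noteq> 0"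
    by (intro det_shift_coords_nonzero[OF c1]) auto
  then show ?thesis
    using SUP_GR_two_newton_blocks[OF big decreasing small a c1 c2] measure by simp
qed

theorem proposition2p3:
  fixes a b :: "nat \<Rightarrow> complex"
  assumes "linearly_recurrent a" and "linearly_recurrent b"
    and "\<exists>B. \<forall>n. cmod (a n - b n) \<le> B"
  shows "(\<forall>z. cmod z > 1 \<longrightarrow> order z (min_poly a) = order z (min_poly b))
         \<and> (SUP k. GR k a) = (SUP k. GR k b)"
proof -
  obtain B where B: "\<And>n. cmod (a n - b n) \<le> B" using assms(3) by blast
  then have B': "\<And>n. cmod (b n - a n) \<le> B" by (simp add: norm_minus_commute)
  have order_eq: "order z (min_poly a) = order z (min_poly b)" if "1 < cmod z" for z
    using order_min_poly_le_if_bounded_diff[OF assms(1,2) B that]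
      order_min_poly_le_if_bounded_diff[OF assms(2,1) B' that] by simp
  then have "outer_roots (min_poly a) = outer_roots (min_poly b)"
    using min_poly_nonzero[OF assms(1)] min_poly_nonzero[OF assms(2)]
    by (intro multiset_eqI) (simp add: outer_roots_def count_proots)
  then show ?thesis using order_eq SUP_GR_eq_outer_roots[OF assms(1)] SUP_GR_eq_outer_roots[OF assms(2)]
    by simp
qed

end
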